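(* For every positive integer $\ell$, \[ \frac{\sum_{d\mid\ell}c_\ell(d)}{\nu(\ell)}\le \ell^{-\frac{\log(3/2)}{\log 2}}. \]
   Context: $\nu$ is the completely multiplicative function with $\nu(p)=p+1$ for primes $p$. The Chebyshev coefficients $c_{j,n}$ are defined by $x^n=\sum_{j=0}^n c_{j,n}U_j(x/2)$, with $U_j$ the Chebyshev polynomials of the second kind; for $d\mid\ell$, $c_\ell(d)=\prod_{p\mid\ell}c_{j_p,n_p}$ where $p^{j_p}\|d$, $p^{n_p}\|\ell$. *)

theory Defs
  imports "HOL-Computational_Algebra.Computational_Algebra" "HOL-Computational_Algebra.Primes"
begin

fun chebyU :: "nat \<Rightarrow> real poly" where
  "chebyU 0 = 1"
| "chebyU (Suc 0) = [:0, 2:]"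
| "chebyU (Suc (Suc n)) = [:0, 2:] * chebyU (Suc n) - chebyU n"

definition chebyU_half :: "nat \<Rightarrow> real poly" where
  "chebyU_half j = pcompose (chebyU j) [:0, 1/2:]"

definition cheb_coeffs :: "nat \<Rightarrow> (nat \<Rightarrow> real)" where
  "cheb_coeffs n = (THE c. (\<forall>j>n. c j = 0) \<and>
      monom 1 n = (\<Sum>j=0..n. smult (c j) (chebyU_half j)))"

definition cheb_c :: "nat \<Rightarrow> nat \<Rightarrow> real" where
  "cheb_c j n = cheb_coeffs n j"

definition c_ell :: "nat \<Rightarrow> nat \<Rightarrow> real" where
  "c_ell l d = (\<Prod>p\<in>prime_factors l. cheb_c (multiplicity p d) (multiplicity p l))"

definition nu :: "nat \<Rightarrow> real" where
  "nu l = (\<Prod>p\<in>prime_factors l. (real p + 1) ^ multiplicity p l)"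

end

theory Submission
  imports Defs "HOL-Library.FuncSet"
begin

text \<open>Both sides are multiplicative in \<open>\<ell>\<close>: the divisor sum factors over the prime powers
  \<open>p\<^sup>n \<parallel> \<ell>\<close> into \<open>\<Sum>\<^sub>j c\<^sub>j\<^sub>,\<^sub>n\<close>, while \<open>\<nu>\<close> and \<open>\<ell>\<^sup>-\<^sup>\<alpha>\<close> (with \<open>\<alpha> = log(3/2)/log 2\<close>) are
  completely multiplicative.
  The coefficients \<open>c\<^sub>j\<^sub>,\<^sub>n\<close> are nonnegative and \<open>U\<^sub>j(1) = j + 1\<close>, so evaluating
  \<open>x\<^sup>n = \<Sum>\<^sub>j c\<^sub>j\<^sub>,\<^sub>n U\<^sub>j(x/2)\<close> at \<open>x = 2\<close> gives \<open>\<Sum>\<^sub>j c\<^sub>j\<^sub>,\<^sub>n \<le> 2\<^sup>n\<close>. It remains to see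
  \<open>2/(p + 1) \<le> p\<^sup>-\<^sup>\<alpha>\<close> for every prime \<open>p\<close>; this is an equality at \<open>p = 2\<close> because \<open>2\<^sup>\<alpha> = 3/2\<close>,
  and for \<open>p \<ge> 3\<close> it follows from \<open>\<alpha> \<le> 3/5\<close> and \<open>32 p\<^sup>3 \<le> (p + 1)\<^sup>5\<close>.\<close>

lemma chebyU_half_0 [simp]: "chebyU_half 0 = 1"
  by (simp add: chebyU_half_def one_pCons pcompose_pCons)

lemma chebyU_half_1 [simp]: "chebyU_half (Suc 0) = [:0, 1:]"
  by (simp add: chebyU_half_def pcompose_pCons)

lemma chebyU_half_Suc_Suc [simp]:
  "chebyU_half (Suc (Suc n)) = pCons 0 (chebyU_half (Suc n)) - chebyU_half n"
  by (simp add: chebyU_half_def pcompose_diff pcompose_pCons pcompose_smult)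

lemma degree_chebyU_half: "degree (chebyU_half j) = j \<and> lead_coeff (chebyU_half j) = 1"
proof (induction j rule: chebyU.induct)
  case (3 n)
  let ?U1 = "chebyU_half (Suc n)" and ?U0 = "chebyU_half n"
  have "degree (- ?U0) < degree (pCons 0 ?U1)"
    using "3.IH" by (subst degree_pCons_eq) auto
  then have deg: "degree (chebyU_half (Suc (Suc n))) = Suc (Suc n)"
    using "3.IH"(1) by (simp only: chebyU_half_Suc_Suc diff_conv_add_uminus degree_add_eq_left)
      (subst degree_pCons_eq, auto)
  have "coeff ?U0 (Suc (Suc n)) = 0"
    using "3.IH"(2) by (simp add: coeff_eq_0)
  then show ?case
    using deg "3.IH"(1) by auto
qed simp_all

lemma pCons_0_chebyU_half:
  "pCons 0 (chebyU_half j) = chebyU_half (Suc j) + (if j = 0 then 0 else chebyU_half (j - 1))"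
  by (cases j) simp_all

lemma poly_chebyU_half_2: "poly (chebyU_half j) 2 = real j + 1"
  by (induction j rule: chebyU.induct) simp_all

text \<open>The recursion comes from \<open>x U\<^sub>j(x/2) = U\<^sub>j\<^sub>+\<^sub>1(x/2) + U\<^sub>j\<^sub>-\<^sub>1(x/2)\<close>.\<close>
fun cheb_coeff_rec :: "nat \<Rightarrow> nat \<Rightarrow> real" where
  "cheb_coeff_rec 0 j = (if j = 0 then 1 else 0)"
| "cheb_coeff_rec (Suc n) j =
     (if j = 0 then cheb_coeff_rec n 1 else cheb_coeff_rec n (j - 1) + cheb_coeff_rec n (j + 1))"

lemma cheb_coeff_rec_eq_0: "n < j \<Longrightarrow> cheb_coeff_rec n j = 0"
  by (induction n arbitrary: j) auto

lemma cheb_coeff_rec_nonneg: "cheb_coeff_rec n j \<ge> 0"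
  by (induction n arbitrary: j) auto

lemma monom_eq_sum_chebyU_half:
  "monom 1 n = (\<Sum>j=0..n. smult (cheb_coeff_rec n j) (chebyU_half j))"
proof (induction n)
  case (Suc n)
  let ?c = "cheb_coeff_rec n" and ?U = chebyU_half
  have "monom (1::real) (Suc n) = [:0, 1:] * monom 1 n"
    by (simp add: monom_Suc)
  also have "\<dots> = (\<Sum>j=0..n. smult (?c j) ([:0, 1:] * ?U j))"
    by (simp only: Suc sum_distrib_left mult_smult_right)
  also have "\<dots> = (\<Sum>j=0..n. smult (?c j) (?U (Suc j)))
                + (\<Sum>j=0..n. smult (?c j) (if j = 0 then 0 else ?U (j - 1)))"
    by (simp add: pCons_0_chebyU_half smult_add_right sum.distrib del: chebyU_half_Suc_Suc)
  also have "(\<Sum>j=0..n. smult (?c j) (?U (Suc j)))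
           = (\<Sum>j=0..Suc n. smult (if j = 0 then 0 else ?c (j - 1)) (?U j))"
    by (subst sum.atLeast0_atMost_Suc_shift) simp
  also have "(\<Sum>j=0..n. smult (?c j) (if j = 0 then 0 else ?U (j - 1)))
           = (\<Sum>j=0..Suc n. smult (?c j) (if j = 0 then 0 else ?U (j - 1)))"
    by (simp add: cheb_coeff_rec_eq_0)
  also have "\<dots> = (\<Sum>j=0..n. smult (?c (Suc j)) (?U j))"
    by (subst sum.atLeast0_atMost_Suc_shift) simp
  also have "\<dots> = (\<Sum>j=0..Suc n. smult (?c (Suc j)) (?U j))"
    by (simp add: cheb_coeff_rec_eq_0)
  also have "(\<Sum>j=0..Suc n. smult (if j = 0 then 0 else ?c (j - 1)) (?U j))
             + (\<Sum>j=0..Suc n. smult (?c (Suc j)) (?U j))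
           = (\<Sum>j=0..Suc n. smult (cheb_coeff_rec (Suc n) j) (?U j))"
    unfolding sum.distrib[symmetric] smult_add_left[symmetric] by (intro sum.cong) auto
  finally show ?case .
qed simp

lemma sum_smult_chebyU_half_eq_0_imp:
  assumes "(\<Sum>i=0..n. smult (e i) (chebyU_half i)) = 0" "j \<le> n"
  shows "e j = 0"
  using assms
proof (induction n arbitrary: j)
  case (Suc n)
  have "(\<Sum>i=0..n. e i * coeff (chebyU_half i) (Suc n)) = 0"
    using degree_chebyU_half by (intro sum.neutral) (simp add: coeff_eq_0)
  then have "coeff (\<Sum>i=0..Suc n. smult (e i) (chebyU_half i)) (Suc n) = e (Suc n)"
    using degree_chebyU_half[of "Suc n"] by (auto simp: coeff_sum)
  then have top: "e (Suc n) = 0"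
    using Suc.prems(1) by (metis coeff_0)
  then have "(\<Sum>i=0..n. smult (e i) (chebyU_half i)) = 0"
    using Suc.prems(1) by simp
  then show ?case
    using Suc.IH Suc.prems(2) top by (metis le_Suc_eq)
qed (use degree_chebyU_half[of 0] in simp)

lemma cheb_c_eq_cheb_coeff_rec: "cheb_c j n = cheb_coeff_rec n j"
proof -
  have "cheb_coeffs n = cheb_coeff_rec n"
    unfolding cheb_coeffs_def
  proof (rule the_equality)
    show "(\<forall>j>n. cheb_coeff_rec n j = 0)
          \<and> monom 1 n = (\<Sum>j=0..n. smult (cheb_coeff_rec n j) (chebyU_half j))"
      using cheb_coeff_rec_eq_0 monom_eq_sum_chebyU_half by blast
  next
    fix c assume c: "(\<forall>j>n. c j = 0) \<and> monom 1 n = (\<Sum>j=0..n. smult (c j) (chebyU_half j))"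
    then have "(\<Sum>j=0..n. smult (c j - cheb_coeff_rec n j) (chebyU_half j)) = 0"
      using monom_eq_sum_chebyU_half[of n] by (simp add: smult_diff_left sum_subtractf)
    then have "c j = cheb_coeff_rec n j" if "j \<le> n" for j
      using sum_smult_chebyU_half_eq_0_imp that by fastforce
    then show "c = cheb_coeff_rec n"
      using c cheb_coeff_rec_eq_0 by (metis ext not_le)
  qed
  then show ?thesis by (simp add: cheb_c_def)
qed

lemma sum_cheb_c_le: "(\<Sum>j\<le>n. cheb_c j n) \<le> 2 ^ n"
proof -
  have "(\<Sum>j\<le>n. cheb_c j n) \<le> (\<Sum>j=0..n. cheb_coeff_rec n j * (real j + 1))"
    by (auto simp: cheb_c_eq_cheb_coeff_rec atLeast0AtMost algebra_simps cheb_coeff_rec_nonneg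
             intro!: sum_mono)
  also have "\<dots> = poly (monom 1 n) 2"
    by (subst monom_eq_sum_chebyU_half) (simp add: poly_sum poly_chebyU_half_2)
  finally show ?thesis by (simp add: poly_monom)
qed

lemma ln_three_halves_div_ln_2_le: "ln (3/2) / ln 2 \<le> (3/5 :: real)"
proof -
  have "5 * ln (3/2::real) = ln ((3/2)^5)" using ln_realpow[of "3/2::real" 5] by simp
  also have "\<dots> \<le> ln (2^3)" by (simp add: power_divide)
  also have "\<dots> = 3 * ln 2" using ln_realpow[of "2::real" 3] by simp
  finally show ?thesis by (simp add: divide_simps)
qed

lemma two_mult_powr_le_prime_plus_1:
  assumes "prime p"
  shows "2 * real p powr (ln (3/2) / ln 2) \<le> real p + 1"
proof (cases "p = 2")
  case True
  then show ?thesis by (simp add: powr_def)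
next
  case False
  then have p3: "real p \<ge> 3" using prime_ge_2_nat[OF assms] by simp
  let ?x = "real p powr (3/5)"
  have "?x ^ 5 = real p ^ 3"
    using p3 by (simp add: powr_power powr_numeral)
  then have "(2 * ?x) ^ 5 = 32 * real p ^ 3" by (simp add: power_mult_distrib)
  also have "\<dots> \<le> (real p + 1) ^ 5"
  proof -
    \<comment> \<open>expansion at \<open>p = 3\<close>, all of whose coefficients are nonnegative\<close>
    have "(real p + 1) ^ 5 - 32 * real p ^ 3 = 160 + 416*(real p-3) + 352*(real p-3)^2
        + 128*(real p-3)^3 + 20*(real p-3)^4 + (real p-3)^5"
      by algebra
    also have "\<dots> \<ge> 0" using p3 by simp
    finally show ?thesis by simp
  qed
  finally have "2 * ?x \<le> real p + 1"
    using p3 power_mono_iff[of "2 * ?x" "real p + 1" 5] by simp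
  moreover have "real p powr (ln (3/2) / ln 2) \<le> ?x"
    using p3 by (intro powr_mono ln_three_halves_div_ln_2_le) simp
  ultimately show ?thesis by linarith
qed

lemma sum_cheb_c_div_le:
  assumes "prime p"
  shows "(\<Sum>j\<le>n. cheb_c j n) / (real p + 1) ^ n \<le> (real p powr - (ln (3/2) / ln 2)) ^ n"
proof -
  have p: "real p > 0" using assms prime_gt_0_nat by simp
  have "2 / (real p + 1) \<le> real p powr - (ln (3/2) / ln 2)"
    using two_mult_powr_le_prime_plus_1[OF assms] p by (simp add: powr_minus field_simps)
  then have "(2 / (real p + 1)) ^ n \<le> (real p powr - (ln (3/2) / ln 2)) ^ n"
    by (rule power_mono) simp
  moreover have "(\<Sum>j\<le>n. cheb_c j n) / (real p + 1) ^ n \<le> (2 / (real p + 1)) ^ n"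
    using sum_cheb_c_le[of n] by (simp add: power_divide divide_right_mono)
  ultimately show ?thesis by linarith
qed

lemma powr_eq_prod_prime_factors:
  assumes "l > 0"
  shows "real l powr a = (\<Prod>p\<in>prime_factors l. (real p powr a) ^ multiplicity p l)"
proof -
  have "real l = (\<Prod>p\<in>prime_factors l. real p ^ multiplicity p l)"
    using prod_prime_factors[of l] assms by (simp flip: of_nat_prod of_nat_power)
  then have "real l powr a = (\<Prod>p\<in>prime_factors l. (real p ^ multiplicity p l) powr a)"
    by (simp add: prod_powr_distrib)
  also have "\<dots> = (\<Prod>p\<in>prime_factors l. (real p powr a) ^ multiplicity p l)"
  proof (intro prod.cong refl)
    fix p assume "p \<in> prime_factors l"
    then have p: "real p > 0" by (simp add: in_prime_factors_iff prime_gt_0_nat)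
    have "(real p ^ multiplicity p l) powr a = real p powr (real (multiplicity p l) * a)"
      using p by (simp add: powr_powr flip: powr_realpow)
    then show "(real p ^ multiplicity p l) powr a = (real p powr a) ^ multiplicity p l"
      using p by (simp add: powr_power)
  qed
  finally show ?thesis .
qed

lemma sum_divisors_prod_multiplicity:
  fixes g :: "nat \<Rightarrow> nat \<Rightarrow> 'a :: comm_semiring_1"
  assumes "l > 0"
  shows "(\<Sum>d | d dvd l. \<Prod>p\<in>prime_factors l. g p (multiplicity p d))
       = (\<Prod>p\<in>prime_factors l. \<Sum>i\<le>multiplicity p l. g p i)"
proof -
  define P where "P = prime_factors l"
  define n where "n p = multiplicity p l" for p
  have primes: "\<And>p. p \<in> P \<Longrightarrow> prime p" unfolding P_def by auto
  have mult_prod: "multiplicity q (\<Prod>p\<in>P. p ^ e p) = (if q \<in> P then e q else 0)"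
    if "prime q" for q e
    using that primes by (intro multiplicity_prod_prime_powers) (auto simp: P_def)
  have l_eq: "l = (\<Prod>p\<in>P. p ^ n p)"
    using prod_prime_factors[of l] assms by (simp add: P_def n_def)
  have "(\<Sum>d | d dvd l. \<Prod>p\<in>P. g p (multiplicity p d))
      = (\<Sum>e\<in>PiE P (\<lambda>p. {..n p}). \<Prod>p\<in>P. g p (e p))"
  proof (rule sum.reindex_bij_witness[of _ "\<lambda>e. \<Prod>p\<in>P. p ^ e p"
                                         "\<lambda>d. restrict (\<lambda>p. multiplicity p d) P"])
    fix e assume e: "e \<in> PiE P (\<lambda>p. {..n p})"
    show "restrict (\<lambda>p. multiplicity p (\<Prod>p\<in>P. p ^ e p)) P = e"
      using e primes mult_prod by (auto simp: PiE_def extensional_def)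
    have "(\<Prod>p\<in>P. p ^ e p) dvd (\<Prod>p\<in>P. p ^ n p)"
      using e by (intro prod_dvd_prod le_imp_power_dvd) auto
    then show "(\<Prod>p\<in>P. p ^ e p) \<in> {d. d dvd l}" using l_eq by simp
  next
    fix d assume "d \<in> {d. d dvd l}"
    then have d: "d dvd l" "d > 0" using assms by (auto intro: dvd_pos_nat)
    have outside: "multiplicity q d = 0" if "prime q" "q \<notin> P" for q
      using that d assms
      by (auto simp: P_def in_prime_factors_iff intro!: not_dvd_imp_multiplicity_0 dest: dvd_trans)
    have "(\<Prod>p\<in>P. p ^ restrict (\<lambda>p. multiplicity p d) P p) = (\<Prod>p\<in>P. p ^ multiplicity p d)"
      by (rule prod.cong) auto
    also have "\<dots> = d"
    proof (rule multiplicity_eq_nat)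
      show "0 < (\<Prod>p\<in>P. p ^ multiplicity p d)"
        using primes by (auto intro!: prod_pos simp: prime_gt_0_nat)
      show "multiplicity q (\<Prod>p\<in>P. p ^ multiplicity p d) = multiplicity q d" if "prime q" for q
        using mult_prod[OF that] outside[OF that] by simp
    qed (use d in simp)
    finally show "(\<Prod>p\<in>P. p ^ restrict (\<lambda>p. multiplicity p d) P p) = d" .
    show "restrict (\<lambda>p. multiplicity p d) P \<in> PiE P (\<lambda>p. {..n p})"
      using d assms by (auto simp: n_def intro!: dvd_imp_multiplicity_le)
    show "(\<Prod>p\<in>P. g p (restrict (\<lambda>p. multiplicity p d) P p))
        = (\<Prod>p\<in>P. g p (multiplicity p d))"
      by simp
  qed
  also have "\<dots> = (\<Prod>p\<in>P. \<Sum>i\<le>n p. g p i)"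
    by (rule prod_sum_PiE[symmetric]) (auto simp: P_def)
  finally show ?thesis by (simp add: P_def n_def)
qed

theorem lemma6p3:
  fixes l :: nat
  assumes "l > 0"
  shows "(\<Sum>d | d dvd l. c_ell l d) / nu l \<le> real l powr (- (ln (3/2) / ln 2))"
proof -
  let ?P = "prime_factors l" and ?n = "\<lambda>p. multiplicity p l"
  let ?a = "- (ln (3/2) / ln 2)"
  have "(\<Sum>d | d dvd l. c_ell l d) = (\<Prod>p\<in>?P. \<Sum>j\<le>?n p. cheb_c j (?n p))"
    unfolding c_ell_def by (rule sum_divisors_prod_multiplicity[OF assms])
  moreover have "nu l = (\<Prod>p\<in>?P. (real p + 1) ^ ?n p)"
    by (simp add: nu_def)
  ultimately have "(\<Sum>d | d dvd l. c_ell l d) / nu l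
                 = (\<Prod>p\<in>?P. (\<Sum>j\<le>?n p. cheb_c j (?n p)) / (real p + 1) ^ ?n p)"
    by (simp add: prod_dividef)
  also have "\<dots> \<le> (\<Prod>p\<in>?P. (real p powr ?a) ^ ?n p)"
    by (intro prod_mono conjI sum_cheb_c_div_le divide_nonneg_pos sum_nonneg)
      (auto simp: cheb_c_eq_cheb_coeff_rec cheb_coeff_rec_nonneg)
  also have "\<dots> = real l powr ?a"
    by (rule powr_eq_prod_prime_factors[OF assms, symmetric])
  finally show ?thesis .
qed

end
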